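(* Let $\delta>0$, let $T$ be a positive integer, and let $\Gamma$ be $\beta$-regular with constants $0<c_0<C_0$. Then $$\mathbb{E}_\Gamma\Bigl[\mathbf 1(\mu<1-3\delta)\min\Bigl(1+\frac{1}{1-2\delta-\mu},\,T(1-\mu)\Bigr)\Bigr]\le C_0\cdot\begin{cases}5+\log(1/\delta),&\beta=1,\\ C(\beta),&\beta>1,\\ C(\beta)\min(\sqrt T,1/\delta)^{1-\beta},&\beta<1,\end{cases}$$ where $C(\beta)$ is a constant depending only on $\beta$.
   Context: A distribution $\Gamma$ on $[0,1]$ is $\beta$-regular if there exist constants $0<c_0<C_0$ such that $c_0\epsilon^\beta\le\mathbb{P}_\Gamma(\mu>1-\epsilon)\le\mathbb{P}_\Gamma(\mu\ge1-\epsilon)\le C_0\epsilon^\beta$ for all $\epsilon\in(0,1]$. $\mathbb{E}_\Gamma$ denotes expectation over $\mu\sim\Gamma$. *)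

theory Defs
  imports "HOL-Probability.Probability"
begin

definition distribution_on_unit :: "real measure \<Rightarrow> bool" where
  "distribution_on_unit \<Gamma> \<longleftrightarrow>
     prob_space \<Gamma> \<and> sets \<Gamma> = sets borel \<and> measure \<Gamma> {0..1} = 1"

definition beta_regular :: "real measure \<Rightarrow> real \<Rightarrow> real \<Rightarrow> real \<Rightarrow> bool" where
  "beta_regular \<Gamma> \<beta> c0 C0 \<longleftrightarrow>
     distribution_on_unit \<Gamma> \<and> 0 < c0 \<and> c0 < C0 \<and>
     (\<forall>\<epsilon>\<in>{0<..1}.
        c0 * \<epsilon> powr \<beta> \<le> measure \<Gamma> {\<mu>. \<mu> > 1 - \<epsilon>} \<and>
        measure \<Gamma> {\<mu>. \<mu> > 1 - \<epsilon>} \<le> measure \<Gamma> {\<mu>. \<mu> \<ge> 1 - \<epsilon>} \<and>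
        measure \<Gamma> {\<mu>. \<mu> \<ge> 1 - \<epsilon>} \<le> C0 * \<epsilon> powr \<beta>)"

end

theory Submission
  imports Defs
begin

text \<open>Write x = 1 - \<mu>. When x > 3\<delta> the integrand is at most 1 + 1/(x - 2\<delta>), and, using the cap
  T x as well, at most 1 + 3 / max x b with b = 3 / (2 min (sqrt T) (1/\<delta>)). Each bound is a
  constant plus the integral of an explicit weight w over (x, 1), so exchanging the order of
  integration bounds the expectation by that constant plus the integral of w(t) P(\<mu> > 1 - t),
  which is at most the integral of w(t) C0 t^\<beta>. For w(t) = (t - 2\<delta>)^-2 on (3\<delta>, 1) this is
  about C0 ln(1/\<delta>) if \<beta> = 1 and C0/(\<beta> - 1) if \<beta> > 1; for \<beta> < 1 the weight 3 t^-2 on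
  (b, 1) gives C0 b^(\<beta>-1)/(1 - \<beta>). The additive constants are absorbed using C0 \<ge> 1, which is
  the upper tail bound at \<epsilon> = 1.\<close>

lemma nn_integral_Ioo_FTC:
  fixes F g :: "real \<Rightarrow> real"
  assumes "a \<le> b"
    and deriv: "\<And>t. a \<le> t \<Longrightarrow> t \<le> b \<Longrightarrow> (F has_real_derivative g t) (at t)"
    and nonneg: "\<And>t. a < t \<Longrightarrow> t < b \<Longrightarrow> 0 \<le> g t"
  shows "(\<integral>\<^sup>+t. ennreal (g t) * indicator {a<..<b} t \<partial>lborel) = ennreal (F b - F a)"
proof -
  have "(g has_integral F b - F a) {a..b}"
    using \<open>a \<le> b\<close> deriv
    by (intro fundamental_theorem_of_calculus)
       (auto simp: has_real_derivative_iff_has_vector_derivative[symmetric]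
             intro: has_field_derivative_at_within)
  then have "(g has_integral F b - F a) {a<..<b}"
    by (simp add: has_integral_Icc_iff_Ioo)
  then show ?thesis
    using nonneg by (intro nn_integral_has_integral_lebesgue') auto
qed

lemma nn_integral_powr_Ioo:
  fixes a b c r :: real
  assumes "0 \<le> c" "0 < a" "a \<le> b" "r \<noteq> -1"
  shows "(\<integral>\<^sup>+t. ennreal (c * t powr r) * indicator {a<..<b} t \<partial>lborel)
           = ennreal (c * (b powr (r + 1) - a powr (r + 1)) / (r + 1))"
proof -
  have "r + 1 \<noteq> 0" using assms(4) by linarith
  have "((\<lambda>t. c * t powr (r + 1) / (r + 1)) has_real_derivative c * t powr r) (at t)"
    if "0 < t" for t
    using that \<open>r + 1 \<noteq> 0\<close> by (auto intro!: derivative_eq_intros)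
  then show ?thesis
    using assms by (subst nn_integral_Ioo_FTC[where F = "\<lambda>t. c * t powr (r + 1) / (r + 1)"])
      (auto simp: diff_divide_distrib right_diff_distrib)
qed

lemma nn_integral_powr_Ioo_le_upper:
  fixes a b c r :: real
  assumes "0 \<le> c" "0 < a" "0 < b" "-1 < r"
  shows "(\<integral>\<^sup>+t. ennreal (c * t powr r) * indicator {a<..<b} t \<partial>lborel)
           \<le> ennreal (c * b powr (r + 1) / (r + 1))"
proof (cases "a \<le> b")
  case True
  then show ?thesis
    using assms by (simp add: nn_integral_powr_Ioo ennreal_leI divide_right_mono mult_left_mono)
next
  case False
  then show ?thesis by simp
qed

lemma nn_integral_powr_Ioo_le_lower:
  fixes a b c r :: real
  assumes "0 \<le> c" "0 < a" "r < -1"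
  shows "(\<integral>\<^sup>+t. ennreal (c * t powr r) * indicator {a<..<b} t \<partial>lborel)
           \<le> ennreal (c * a powr (r + 1) / - (r + 1))"
proof (cases "a \<le> b")
  case True
  have "c * (b powr (r + 1) - a powr (r + 1)) / (r + 1)
      = c * (a powr (r + 1) - b powr (r + 1)) / - (r + 1)"
    by (simp add: divide_simps) (simp add: algebra_simps)
  also have "\<dots> \<le> c * a powr (r + 1) / - (r + 1)"
    using assms by (intro divide_right_mono mult_left_mono) auto
  finally show ?thesis
    using assms True by (simp add: nn_integral_powr_Ioo ennreal_leI)
next
  case False
  then show ?thesis by simp
qed

lemma measurable_upper_tail_weight:
  fixes w :: "real \<Rightarrow> ennreal"
  assumes "sets \<Gamma> = sets borel" "w \<in> borel_measurable borel"
  shows "(\<lambda>(\<mu>, t). w t * indicator {1 - \<mu><..} t) \<in> borel_measurable (\<Gamma> \<Otimes>\<^sub>M lborel)"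
proof -
  have "(\<lambda>p::real \<times> real. w (snd p) * indicator {p. 1 - fst p < snd p} p)
      \<in> borel_measurable (borel \<Otimes>\<^sub>M borel)"
    using assms(2) by measurable
  then show ?thesis
    by (subst measurable_cong_sets[OF sets_pair_measure_cong[OF assms(1) sets_lborel] refl])
       (simp add: case_prod_beta indicator_def)
qed

lemma nn_integral_upper_tail_Fubini:
  fixes w :: "real \<Rightarrow> ennreal"
  assumes "sigma_finite_measure \<Gamma>" "sets \<Gamma> = sets borel" "w \<in> borel_measurable borel"
  shows "(\<integral>\<^sup>+\<mu>. (\<integral>\<^sup>+t. w t * indicator {1 - \<mu><..} t \<partial>lborel) \<partial>\<Gamma>)
           = (\<integral>\<^sup>+t. w t * emeasure \<Gamma> {1 - t<..} \<partial>lborel)"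
proof -
  interpret pair_sigma_finite \<Gamma> lborel
    using assms(1) by (simp add: pair_sigma_finite.intro sigma_finite_lborel)
  have "(\<integral>\<^sup>+\<mu>. (\<integral>\<^sup>+t. w t * indicator {1 - \<mu><..} t \<partial>lborel) \<partial>\<Gamma>)
      = (\<integral>\<^sup>+t. (\<integral>\<^sup>+\<mu>. w t * indicator {1 - \<mu><..} t \<partial>\<Gamma>) \<partial>lborel)"
    using Fubini'[OF measurable_upper_tail_weight[OF assms(2,3)]] by simp
  also have "\<dots> = (\<integral>\<^sup>+t. (\<integral>\<^sup>+\<mu>. w t * indicator {1 - t<..} \<mu> \<partial>\<Gamma>) \<partial>lborel)"
    by (intro nn_integral_cong) (auto simp: indicator_def)
  also have "\<dots> = (\<integral>\<^sup>+t. w t * emeasure \<Gamma> {1 - t<..} \<partial>lborel)"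
    using assms(2) by (simp add: nn_integral_cmult_indicator)
  finally show ?thesis .
qed

lemma nn_integral_le_upper_tail_weighted:
  fixes f G :: "real \<Rightarrow> real" and w :: "real \<Rightarrow> ennreal"
  assumes \<Gamma>: "prob_space \<Gamma>" "sets \<Gamma> = sets borel"
    and w: "w \<in> borel_measurable borel" "\<And>t. t \<notin> {0<..<1} \<Longrightarrow> w t = 0"
    and tail: "\<And>t. 0 < t \<Longrightarrow> t < 1 \<Longrightarrow> measure \<Gamma> {1 - t<..} \<le> G t"
    and f: "AE \<mu> in \<Gamma>. ennreal (f \<mu>) \<le> A + (\<integral>\<^sup>+t. w t * indicator {1 - \<mu><..} t \<partial>lborel)"
  shows "(\<integral>\<^sup>+\<mu>. ennreal (f \<mu>) \<partial>\<Gamma>) \<le> A + (\<integral>\<^sup>+t. w t * ennreal (G t) \<partial>lborel)"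
proof -
  interpret prob_space \<Gamma> by (rule \<Gamma>(1))
  have inner: "(\<lambda>\<mu>. \<integral>\<^sup>+t. w t * indicator {1 - \<mu><..} t \<partial>lborel) \<in> borel_measurable \<Gamma>"
    using lborel.borel_measurable_nn_integral[OF measurable_upper_tail_weight[OF \<Gamma>(2) w(1)]] by simp
  have "(\<integral>\<^sup>+\<mu>. ennreal (f \<mu>) \<partial>\<Gamma>) \<le> (\<integral>\<^sup>+\<mu>. A + (\<integral>\<^sup>+t. w t * indicator {1 - \<mu><..} t \<partial>lborel) \<partial>\<Gamma>)"
    by (rule nn_integral_mono_AE[OF f])
  also have "\<dots> = A + (\<integral>\<^sup>+\<mu>. (\<integral>\<^sup>+t. w t * indicator {1 - \<mu><..} t \<partial>lborel) \<partial>\<Gamma>)"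
    using inner by (simp add: nn_integral_add emeasure_space_1)
  also have "\<dots> = A + (\<integral>\<^sup>+t. w t * emeasure \<Gamma> {1 - t<..} \<partial>lborel)"
    using \<Gamma>(2) w(1)
    by (simp add: nn_integral_upper_tail_Fubini prob_space_imp_sigma_finite[OF \<Gamma>(1)])
  also have "\<dots> \<le> A + (\<integral>\<^sup>+t. w t * ennreal (G t) \<partial>lborel)"
  proof (intro add_left_mono nn_integral_mono)
    fix t
    show "w t * emeasure \<Gamma> {1 - t<..} \<le> w t * ennreal (G t)"
      using w(2)[of t] tail[of t]
      by (cases "0 < t \<and> t < 1") (auto simp: emeasure_eq_measure intro!: mult_left_mono ennreal_leI)
  qed
  finally show ?thesis .
qed

lemma beta_regular_distribution:
  assumes "beta_regular \<Gamma> \<beta> c0 C0"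
  shows "prob_space \<Gamma>" "sets \<Gamma> = sets borel" "AE \<mu> in \<Gamma>. \<mu> \<in> {0..1}"
proof -
  show "prob_space \<Gamma>" "sets \<Gamma> = sets borel"
    using assms by (auto simp: beta_regular_def distribution_on_unit_def)
  then show "AE \<mu> in \<Gamma>. \<mu> \<in> {0..1}"
    using assms
    by (intro prob_space.AE_prob_1) (auto simp: beta_regular_def distribution_on_unit_def)
qed

lemma beta_regular_upper_tail:
  assumes "beta_regular \<Gamma> \<beta> c0 C0" "0 < t" "t \<le> 1"
  shows "measure \<Gamma> {1 - t<..} \<le> C0 * t powr \<beta>"
proof -
  have "measure \<Gamma> {\<mu>. \<mu> > 1 - t} \<le> C0 * t powr \<beta>"
    using assms unfolding beta_regular_def by (meson greaterThanAtMost_iff order.trans)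
  then show ?thesis by (simp add: greaterThan_def)
qed

lemma beta_regular_one_le_C0:
  assumes "beta_regular \<Gamma> \<beta> c0 C0"
  shows "1 \<le> C0"
proof -
  interpret prob_space \<Gamma> using beta_regular_distribution(1)[OF assms] .
  have "1 = measure \<Gamma> {0..1}"
    using assms by (simp add: beta_regular_def distribution_on_unit_def)
  also have "\<dots> \<le> measure \<Gamma> {\<mu>. \<mu> \<ge> 1 - 1}"
    using beta_regular_distribution(2)[OF assms] by (intro finite_measure_mono) auto
  also have "\<dots> \<le> C0 * 1 powr \<beta>"
    using assms unfolding beta_regular_def
    by (meson greaterThanAtMost_iff order.trans zero_less_one order_refl)
  finally show ?thesis by simp
qed

definition gap_integrand :: "real \<Rightarrow> nat \<Rightarrow> real \<Rightarrow> real" where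
  "gap_integrand \<delta> T \<mu> =
     indicator {..<1 - 3 * \<delta>} \<mu> * min (1 + 1 / (1 - 2 * \<delta> - \<mu>)) (real T * (1 - \<mu>))"

lemma gap_integrand_le_reciprocal_tail:
  fixes \<delta> \<mu> :: real
  assumes \<delta>: "0 < \<delta>" "\<delta> < 1/3" and "0 \<le> \<mu>"
  shows "ennreal (gap_integrand \<delta> T \<mu>) \<le> ennreal (1 + 1 / (1 - 2 * \<delta>)) +
    (\<integral>\<^sup>+t. ennreal (1 / (t - 2 * \<delta>)^2) * indicator {3 * \<delta><..<1} t * indicator {1 - \<mu><..} t \<partial>lborel)"
proof (cases "\<mu> < 1 - 3 * \<delta>")
  case False
  then show ?thesis by (simp add: gap_integrand_def)
next
  case True
  define x where "x = 1 - \<mu>"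
  have x: "3 * \<delta> < x" "x \<le> 1"
    using True \<open>0 \<le> \<mu>\<close> by (auto simp: x_def)
  have "(\<integral>\<^sup>+t. ennreal (1 / (t - 2 * \<delta>)^2) * indicator {3 * \<delta><..<1} t * indicator {1 - \<mu><..} t \<partial>lborel)
      = (\<integral>\<^sup>+t. ennreal (1 / (t - 2 * \<delta>)^2) * indicator {x<..<1} t \<partial>lborel)"
    using x by (intro nn_integral_cong) (auto simp: x_def indicator_def)
  also have "\<dots> = ennreal (- 1 / (1 - 2 * \<delta>) - - 1 / (x - 2 * \<delta>))"
    using x \<delta>
    by (intro nn_integral_Ioo_FTC) (auto intro!: derivative_eq_intros simp: power2_eq_square)
  finally have integral:
    "(\<integral>\<^sup>+t. ennreal (1 / (t - 2 * \<delta>)^2) * indicator {3 * \<delta><..<1} t * indicator {1 - \<mu><..} t \<partial>lborel)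
       = ennreal (1 / (x - 2 * \<delta>) - 1 / (1 - 2 * \<delta>))"
    by simp
  have gap: "1 - 2 * \<delta> - \<mu> = x - 2 * \<delta>" by (simp add: x_def)
  have "ennreal (gap_integrand \<delta> T \<mu>)
      \<le> ennreal ((1 + 1 / (1 - 2 * \<delta>)) + (1 / (x - 2 * \<delta>) - 1 / (1 - 2 * \<delta>)))"
    using True unfolding gap_integrand_def gap by (intro ennreal_leI) simp
  also have "\<dots> = ennreal (1 + 1 / (1 - 2 * \<delta>)) + ennreal (1 / (x - 2 * \<delta>) - 1 / (1 - 2 * \<delta>))"
    using x \<delta> by (intro ennreal_plus) (simp_all add: frac_le)
  finally show ?thesis
    unfolding integral .
qed

lemma min_reciprocal_gap_le:
  fixes x \<delta> :: real and T :: nat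
  assumes \<delta>: "0 < \<delta>" and x: "3 * \<delta> < x" and "0 < T"
  shows "min (1 + 1 / (x - 2 * \<delta>)) (real T * x)
           \<le> 1 + 3 / max x (3 / (2 * min (sqrt (real T)) (1 / \<delta>)))"
proof -
  define M where "M = min (sqrt (real T)) (1 / \<delta>)"
  have "0 < M" using \<delta> \<open>0 < T\<close> by (simp add: M_def)
  have reciprocal_le: "1 / (x - 2 * \<delta>) \<le> 3 / x" "1 / (x - 2 * \<delta>) \<le> 1 / \<delta>"
    using \<delta> x by (simp_all add: divide_simps)
  show ?thesis
  proof (cases "3 / (2 * M) \<le> x")
    case True
    then show ?thesis using reciprocal_le(1) by (simp add: M_def)
  next
    case False
    then have "3 / max x (3 / (2 * M)) = 2 * M" using \<open>0 < M\<close> by simp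
    moreover have "1 / (x - 2 * \<delta>) \<le> 2 * M \<or> real T * x \<le> 1 + 2 * M"
    proof (cases "M = 1 / \<delta>")
      case True
      moreover have "1 / \<delta> \<le> 2 / \<delta>" using \<delta> by (simp add: divide_right_mono)
      ultimately show ?thesis using reciprocal_le(2) by simp
    next
      case False
      then have M: "M = sqrt (real T)" by (auto simp: M_def min_def split: if_splits)
      have "real T * x \<le> real T * (3 / (2 * M))"
        using \<open>\<not> 3 / (2 * M) \<le> x\<close> by (intro mult_left_mono) auto
      also have "\<dots> = 3 / 2 * M"
        using \<open>0 < M\<close> by (simp add: M field_simps)
      finally show ?thesis using \<open>0 < M\<close> by simp
    qed
    ultimately show ?thesis by (auto simp: M_def)
  qed
qed

lemma gap_integrand_le_capped_tail:
  fixes \<delta> \<mu> :: real and T :: nat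
  assumes \<delta>: "0 < \<delta>" "\<delta> < 1/3" and "0 \<le> \<mu>" and "0 < T"
  defines "b \<equiv> 3 / (2 * min (sqrt (real T)) (1 / \<delta>))"
  shows "ennreal (gap_integrand \<delta> T \<mu>) \<le> 4 +
    (\<integral>\<^sup>+t. ennreal (3 * t powr - 2) * indicator {b<..<1} t * indicator {1 - \<mu><..} t \<partial>lborel)"
proof (cases "\<mu> < 1 - 3 * \<delta>")
  case False
  then show ?thesis by (simp add: gap_integrand_def)
next
  case True
  define x where "x = 1 - \<mu>"
  define y where "y = max x b"
  have x: "3 * \<delta> < x" "x \<le> 1"
    using True \<open>0 \<le> \<mu>\<close> by (auto simp: x_def)
  have "0 < b" using \<delta> \<open>0 < T\<close> by (simp add: b_def)
  have gap: "1 - 2 * \<delta> - \<mu> = x - 2 * \<delta>" "1 - \<mu> = x" by (simp_all add: x_def)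
  have bound: "gap_integrand \<delta> T \<mu> \<le> 1 + 3 / y"
    using True min_reciprocal_gap_le[OF \<delta>(1) x(1) \<open>0 < T\<close>]
    unfolding gap_integrand_def gap y_def b_def by simp
  show ?thesis
  proof (cases "1 \<le> y")
    case True
    then have "3 / y \<le> 3" by (simp add: divide_le_eq)
    then have "ennreal (gap_integrand \<delta> T \<mu>) \<le> 4"
      using bound by (simp add: ennreal_leI[of _ 4, simplified])
    then show ?thesis by (rule order.trans) simp
  next
    case False
    have "0 < y" using \<open>0 < b\<close> by (simp add: y_def)
    have "(\<integral>\<^sup>+t. ennreal (3 * t powr - 2) * indicator {b<..<1} t * indicator {1 - \<mu><..} t \<partial>lborel)
        = (\<integral>\<^sup>+t. ennreal (3 * t powr - 2) * indicator {y<..<1} t \<partial>lborel)"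
      by (intro nn_integral_cong) (auto simp: indicator_def y_def x_def)
    also have "\<dots> = ennreal (3 / y - 3)"
      using False \<open>0 < y\<close>
      by (subst nn_integral_powr_Ioo) (auto simp: powr_minus_divide divide_simps)
    finally have integral:
      "(\<integral>\<^sup>+t. ennreal (3 * t powr - 2) * indicator {b<..<1} t * indicator {1 - \<mu><..} t \<partial>lborel)
         = ennreal (3 / y - 3)" .
    have "ennreal (gap_integrand \<delta> T \<mu>) \<le> ennreal (4 + (3 / y - 3))"
      using bound by (intro ennreal_leI) simp
    also have "\<dots> = 4 + ennreal (3 / y - 3)"
      using False \<open>0 < y\<close> by (subst ennreal_plus) (auto simp: divide_simps)
    finally show ?thesis
      unfolding integral .
  qed
qed

lemma nn_integral_gap_integrand_le_reciprocal:
  assumes reg: "beta_regular \<Gamma> \<beta> c0 C0" and \<delta>: "0 < \<delta>" "\<delta> < 1/3"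
  shows "(\<integral>\<^sup>+\<mu>. ennreal (gap_integrand \<delta> T \<mu>) \<partial>\<Gamma>) \<le> ennreal (1 + 1 / (1 - 2 * \<delta>)) +
    (\<integral>\<^sup>+t. ennreal (C0 * t powr \<beta> / (t - 2 * \<delta>)^2) * indicator {3 * \<delta><..<1} t \<partial>lborel)"
proof -
  let ?w = "\<lambda>t. ennreal (1 / (t - 2 * \<delta>)^2) * indicator {3 * \<delta><..<1} t"
  have "(\<integral>\<^sup>+\<mu>. ennreal (gap_integrand \<delta> T \<mu>) \<partial>\<Gamma>)
      \<le> ennreal (1 + 1 / (1 - 2 * \<delta>)) + (\<integral>\<^sup>+t. ?w t * ennreal (C0 * t powr \<beta>) \<partial>lborel)"
  proof (rule nn_integral_le_upper_tail_weighted)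
    show "AE \<mu> in \<Gamma>. ennreal (gap_integrand \<delta> T \<mu>)
        \<le> ennreal (1 + 1 / (1 - 2 * \<delta>)) + (\<integral>\<^sup>+t. ?w t * indicator {1 - \<mu><..} t \<partial>lborel)"
      using beta_regular_distribution(3)[OF reg]
      by eventually_elim (auto intro: gap_integrand_le_reciprocal_tail[OF \<delta>])
  qed (use beta_regular_distribution[OF reg] beta_regular_upper_tail[OF reg] \<delta> in auto)
  also have "(\<integral>\<^sup>+t. ?w t * ennreal (C0 * t powr \<beta>) \<partial>lborel)
      = (\<integral>\<^sup>+t. ennreal (C0 * t powr \<beta> / (t - 2 * \<delta>)^2) * indicator {3 * \<delta><..<1} t \<partial>lborel)"
    using beta_regular_one_le_C0[OF reg]
    by (intro nn_integral_cong)
       (simp add: ennreal_mult'[symmetric] mult.commute split: split_indicator)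
  finally show ?thesis .
qed

lemma nn_integral_gap_integrand_le_capped:
  assumes reg: "beta_regular \<Gamma> \<beta> c0 C0" and \<delta>: "0 < \<delta>" "\<delta> < 1/3" and "0 < T"
  defines "b \<equiv> 3 / (2 * min (sqrt (real T)) (1 / \<delta>))"
  shows "(\<integral>\<^sup>+\<mu>. ennreal (gap_integrand \<delta> T \<mu>) \<partial>\<Gamma>) \<le> 4 +
    (\<integral>\<^sup>+t. ennreal (3 * C0 * t powr (\<beta> - 2)) * indicator {b<..<1} t \<partial>lborel)"
proof -
  have "0 < b" using \<delta> \<open>0 < T\<close> by (simp add: b_def)
  let ?w = "\<lambda>t. ennreal (3 * t powr - 2) * indicator {b<..<1} t"
  have "(\<integral>\<^sup>+\<mu>. ennreal (gap_integrand \<delta> T \<mu>) \<partial>\<Gamma>)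
      \<le> 4 + (\<integral>\<^sup>+t. ?w t * ennreal (C0 * t powr \<beta>) \<partial>lborel)"
  proof (rule nn_integral_le_upper_tail_weighted)
    show "AE \<mu> in \<Gamma>. ennreal (gap_integrand \<delta> T \<mu>)
        \<le> 4 + (\<integral>\<^sup>+t. ?w t * indicator {1 - \<mu><..} t \<partial>lborel)"
      using beta_regular_distribution(3)[OF reg]
      by eventually_elim (auto simp: b_def intro: gap_integrand_le_capped_tail[OF \<delta> _ \<open>0 < T\<close>])
  qed (use beta_regular_distribution[OF reg] beta_regular_upper_tail[OF reg] \<open>0 < b\<close> in auto)
  also have "(\<integral>\<^sup>+t. ?w t * ennreal (C0 * t powr \<beta>) \<partial>lborel)
      = (\<integral>\<^sup>+t. ennreal (3 * C0 * t powr (\<beta> - 2)) * indicator {b<..<1} t \<partial>lborel)"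
    using beta_regular_one_le_C0[OF reg] \<open>0 < b\<close>
    by (intro nn_integral_cong)
       (auto simp: ennreal_mult'[symmetric] powr_add[symmetric] mult_ac split: split_indicator)
  finally show ?thesis .
qed

lemma nn_integral_gap_integrand_le_beta_eq_1:
  assumes reg: "beta_regular \<Gamma> 1 c0 C0" and \<delta>: "0 < \<delta>" "\<delta> < 1/3"
  shows "(\<integral>\<^sup>+\<mu>. ennreal (gap_integrand \<delta> T \<mu>) \<partial>\<Gamma>) \<le> ennreal (C0 * (5 + ln (1 / \<delta>)))"
proof -
  have "1 \<le> C0" by (rule beta_regular_one_le_C0[OF reg])
  define q where "q = 2 * \<delta> / (1 - 2 * \<delta>)"
  have q: "0 \<le> q" "q < 2" "1 + 1 / (1 - 2 * \<delta>) = 2 + q"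
    using \<delta> by (auto simp: q_def divide_simps)
  define V where "V = C0 * (ln (1 - 2 * \<delta>) - ln \<delta>) + C0 * (2 - q)"
  have "0 \<le> V"
    using \<delta> q \<open>1 \<le> C0\<close> by (simp add: V_def)
  have deriv: "((\<lambda>t. C0 * (ln (t - 2 * \<delta>) - 2 * \<delta> / (t - 2 * \<delta>)))
      has_real_derivative C0 * t powr 1 / (t - 2 * \<delta>)^2) (at t)" if "3 * \<delta> \<le> t" for t
  proof -
    have "0 < t - 2 * \<delta>" "0 < t" using that \<delta> by auto
    then have "C0 * t powr 1 / (t - 2 * \<delta>)^2 = C0 * (1 / (t - 2 * \<delta>) + 2 * \<delta> / (t - 2 * \<delta>)^2)"
      by (simp add: divide_simps power2_eq_square)
    then show ?thesis
      using \<open>0 < t - 2 * \<delta>\<close> by (auto intro!: derivative_eq_intros simp: power2_eq_square)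
  qed
  have "(\<integral>\<^sup>+\<mu>. ennreal (gap_integrand \<delta> T \<mu>) \<partial>\<Gamma>)
      \<le> ennreal (2 + q) +
        (\<integral>\<^sup>+t. ennreal (C0 * t powr 1 / (t - 2 * \<delta>)^2) * indicator {3 * \<delta><..<1} t \<partial>lborel)"
    using nn_integral_gap_integrand_le_reciprocal[OF reg \<delta>] q(3) by simp
  also have "(\<integral>\<^sup>+t. ennreal (C0 * t powr 1 / (t - 2 * \<delta>)^2) * indicator {3 * \<delta><..<1} t \<partial>lborel)
      = ennreal V"
    using \<delta> \<open>1 \<le> C0\<close>
    by (subst nn_integral_Ioo_FTC[OF _ deriv]) (auto simp: V_def q_def algebra_simps)
  also have "ennreal (2 + q) + ennreal V = ennreal (2 + q + V)"
    using q \<open>0 \<le> V\<close> by simp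
  also have "\<dots> \<le> ennreal (C0 * (5 + ln (1 / \<delta>)))"
  proof (intro ennreal_leI)
    have "C0 * ln (1 - 2 * \<delta>) \<le> 0"
      using \<delta> \<open>1 \<le> C0\<close> by (simp add: mult_nonneg_nonpos)
    moreover have "q \<le> C0 * q"
      using mult_right_mono[OF \<open>1 \<le> C0\<close> q(1)] by simp
    ultimately show "2 + q + V \<le> C0 * (5 + ln (1 / \<delta>))"
      using \<open>1 \<le> C0\<close> \<delta> by (simp add: V_def ln_div algebra_simps)
  qed
  finally show ?thesis .
qed

lemma nn_integral_gap_integrand_le_beta_gt_1:
  assumes reg: "beta_regular \<Gamma> \<beta> c0 C0" and "1 < \<beta>" and \<delta>: "0 < \<delta>" "\<delta> < 1/3"
  shows "(\<integral>\<^sup>+\<mu>. ennreal (gap_integrand \<delta> T \<mu>) \<partial>\<Gamma>) \<le> ennreal (C0 * (4 + 9 / (\<beta> - 1)))"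
proof -
  have "1 \<le> C0" by (rule beta_regular_one_le_C0[OF reg])
  have weight_le: "C0 * t powr \<beta> / (t - 2 * \<delta>)^2 \<le> 9 * C0 * t powr (\<beta> - 2)" if "3 * \<delta> < t" for t
  proof -
    have "0 < t" "0 \<le> t / (t - 2 * \<delta>)" "t / (t - 2 * \<delta>) \<le> 3"
      using that \<delta> by (auto simp: divide_simps)
    then have "(t / (t - 2 * \<delta>))^2 \<le> 3^2" by (intro power_mono) auto
    then have "C0 * t powr (\<beta> - 2) * (t / (t - 2 * \<delta>))^2 \<le> C0 * t powr (\<beta> - 2) * 9"
      using \<open>1 \<le> C0\<close> by (intro mult_left_mono) auto
    moreover have "t powr \<beta> = t powr (\<beta> - 2) * t^2"
      using \<open>0 < t\<close> by (simp add: powr_diff)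
    ultimately show ?thesis by (simp add: power_divide mult_ac)
  qed
  have "(\<integral>\<^sup>+\<mu>. ennreal (gap_integrand \<delta> T \<mu>) \<partial>\<Gamma>) \<le> ennreal (1 + 1 / (1 - 2 * \<delta>)) +
      (\<integral>\<^sup>+t. ennreal (C0 * t powr \<beta> / (t - 2 * \<delta>)^2) * indicator {3 * \<delta><..<1} t \<partial>lborel)"
    by (rule nn_integral_gap_integrand_le_reciprocal[OF reg \<delta>])
  also have "(\<integral>\<^sup>+t. ennreal (C0 * t powr \<beta> / (t - 2 * \<delta>)^2) * indicator {3 * \<delta><..<1} t \<partial>lborel)
      \<le> (\<integral>\<^sup>+t. ennreal (9 * C0 * t powr (\<beta> - 2)) * indicator {3 * \<delta><..<1} t \<partial>lborel)"
    using weight_le by (intro nn_integral_mono) (simp add: ennreal_leI split: split_indicator)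
  also have "\<dots> \<le> ennreal (9 * C0 / (\<beta> - 1))"
    using nn_integral_powr_Ioo_le_upper[of "9 * C0" "3 * \<delta>" 1 "\<beta> - 2"] \<open>1 < \<beta>\<close> \<open>1 \<le> C0\<close> \<delta>
    by (simp add: algebra_simps)
  also have "ennreal (1 + 1 / (1 - 2 * \<delta>)) + ennreal (9 * C0 / (\<beta> - 1))
      = ennreal (1 + 1 / (1 - 2 * \<delta>) + 9 * C0 / (\<beta> - 1))"
    using \<delta> \<open>1 < \<beta>\<close> \<open>1 \<le> C0\<close> by (intro ennreal_plus[symmetric]) auto
  also have "\<dots> \<le> ennreal (C0 * (4 + 9 / (\<beta> - 1)))"
  proof (intro ennreal_leI)
    have "1 + 1 / (1 - 2 * \<delta>) \<le> 4" using \<delta> by (simp add: divide_simps)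
    with \<open>1 \<le> C0\<close> show "1 + 1 / (1 - 2 * \<delta>) + 9 * C0 / (\<beta> - 1) \<le> C0 * (4 + 9 / (\<beta> - 1))"
      by (simp add: distrib_left mult.commute)
  qed
  finally show ?thesis by (simp add: add_left_mono)
qed

lemma nn_integral_gap_integrand_le_beta_lt_1:
  assumes reg: "beta_regular \<Gamma> \<beta> c0 C0" and "\<beta> < 1" and \<delta>: "0 < \<delta>" "\<delta> < 1/3" and "0 < T"
  shows "(\<integral>\<^sup>+\<mu>. ennreal (gap_integrand \<delta> T \<mu>) \<partial>\<Gamma>)
    \<le> ennreal (C0 * ((4 + 3 / (1 - \<beta>)) * min (sqrt (real T)) (1 / \<delta>) powr (1 - \<beta>)))"
proof -
  define M where "M = min (sqrt (real T)) (1 / \<delta>)"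
  define b where "b = 3 / (2 * M)"
  have "1 \<le> C0" by (rule beta_regular_one_le_C0[OF reg])
  have "1 \<le> M" using \<delta> \<open>0 < T\<close> by (simp add: M_def)
  then have "0 < b" by (simp add: b_def)
  have "b powr (\<beta> - 1) = (1 / b) powr (1 - \<beta>)"
    using \<open>0 < b\<close> by (simp add: powr_divide powr_minus_divide[symmetric])
  also have "\<dots> \<le> M powr (1 - \<beta>)"
    using \<open>1 \<le> M\<close> \<open>\<beta> < 1\<close> by (intro powr_mono2) (auto simp: b_def)
  finally have b_powr: "b powr (\<beta> - 1) \<le> M powr (1 - \<beta>)" .
  have "1 \<le> M powr (1 - \<beta>)"
    using \<open>1 \<le> M\<close> \<open>\<beta> < 1\<close> by (intro ge_one_powr_ge_zero) auto
  have "(\<integral>\<^sup>+\<mu>. ennreal (gap_integrand \<delta> T \<mu>) \<partial>\<Gamma>)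
      \<le> 4 + (\<integral>\<^sup>+t. ennreal (3 * C0 * t powr (\<beta> - 2)) * indicator {b<..<1} t \<partial>lborel)"
    unfolding b_def M_def by (rule nn_integral_gap_integrand_le_capped[OF reg \<delta> \<open>0 < T\<close>])
  also have "(\<integral>\<^sup>+t. ennreal (3 * C0 * t powr (\<beta> - 2)) * indicator {b<..<1} t \<partial>lborel)
      \<le> ennreal (3 * C0 * b powr (\<beta> - 1) / (1 - \<beta>))"
    using nn_integral_powr_Ioo_le_lower[of "3 * C0" b "\<beta> - 2" 1] \<open>\<beta> < 1\<close> \<open>1 \<le> C0\<close> \<open>0 < b\<close>
    by (simp add: algebra_simps)
  also have "4 + ennreal (3 * C0 * b powr (\<beta> - 1) / (1 - \<beta>))
      = ennreal (4 + 3 * C0 * b powr (\<beta> - 1) / (1 - \<beta>))"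
    using \<open>\<beta> < 1\<close> \<open>1 \<le> C0\<close> by (subst ennreal_plus) auto
  also have "\<dots> \<le> ennreal (C0 * ((4 + 3 / (1 - \<beta>)) * M powr (1 - \<beta>)))"
  proof (intro ennreal_leI)
    have "4 \<le> 4 * (C0 * M powr (1 - \<beta>))"
      using mult_mono[OF \<open>1 \<le> C0\<close> \<open>1 \<le> M powr (1 - \<beta>)\<close>] \<open>1 \<le> C0\<close> by simp
    moreover have "3 * C0 * b powr (\<beta> - 1) / (1 - \<beta>) \<le> 3 * (C0 * M powr (1 - \<beta>)) / (1 - \<beta>)"
      using b_powr \<open>\<beta> < 1\<close> \<open>1 \<le> C0\<close> by (intro divide_right_mono mult_left_mono) auto
    moreover have "C0 * ((4 + 3 / (1 - \<beta>)) * M powr (1 - \<beta>))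
        = 4 * (C0 * M powr (1 - \<beta>)) + 3 * (C0 * M powr (1 - \<beta>)) / (1 - \<beta>)"
      by (simp add: algebra_simps)
    ultimately show "4 + 3 * C0 * b powr (\<beta> - 1) / (1 - \<beta>)
        \<le> C0 * ((4 + 3 / (1 - \<beta>)) * M powr (1 - \<beta>))"
      by linarith
  qed
  finally show ?thesis by (simp add: M_def add_left_mono)
qed

definition gap_bound_constant :: "real \<Rightarrow> real" where
  "gap_bound_constant \<beta> = (if 1 < \<beta> then 4 + 9 / (\<beta> - 1) else 4 + 3 / (1 - \<beta>))"

lemma nn_integral_gap_integrand_le:
  assumes reg: "beta_regular \<Gamma> \<beta> c0 C0" and \<delta>: "0 < \<delta>" "\<delta> < 1" and "0 < T"
  shows "(\<integral>\<^sup>+\<mu>. ennreal (gap_integrand \<delta> T \<mu>) \<partial>\<Gamma>)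
    \<le> ennreal (C0 * (if \<beta> = 1 then 5 + ln (1 / \<delta>)
                     else if \<beta> > 1 then gap_bound_constant \<beta>
                     else gap_bound_constant \<beta> * min (sqrt (real T)) (1 / \<delta>) powr (1 - \<beta>)))"
proof (cases "\<delta> < 1/3")
  case False
  have "AE \<mu> in \<Gamma>. ennreal (gap_integrand \<delta> T \<mu>) = 0"
    using beta_regular_distribution(3)[OF reg]
    by eventually_elim (use False in \<open>auto simp: gap_integrand_def\<close>)
  then show ?thesis by (simp add: nn_integral_cong_AE)
next
  case True
  consider "\<beta> = 1" | "1 < \<beta>" | "\<beta> < 1" by linarith
  then show ?thesis
  proof cases
    case 1
    then show ?thesis using nn_integral_gap_integrand_le_beta_eq_1 reg \<delta>(1) True by simp
  next
    case 2
    then show ?thesis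
      using nn_integral_gap_integrand_le_beta_gt_1[OF reg _ \<delta>(1) True]
      by (simp add: gap_bound_constant_def)
  next
    case 3
    then show ?thesis
      using nn_integral_gap_integrand_le_beta_lt_1[OF reg _ \<delta>(1) True \<open>0 < T\<close>]
      by (simp add: gap_bound_constant_def)
  qed
qed

theorem lemma9:
  fixes \<beta> :: real
  shows "\<exists>C::real. \<forall>(\<Gamma>::real measure) c0 C0 (\<delta>::real) (T::nat).
    beta_regular \<Gamma> \<beta> c0 C0 \<longrightarrow> 0 < \<delta> \<longrightarrow> \<delta> < 1 \<longrightarrow> 0 < T \<longrightarrow>
    (\<integral>\<mu>. indicator {..<1 - 3 * \<delta>} \<mu> *
           min (1 + 1 / (1 - 2 * \<delta> - \<mu>)) (real T * (1 - \<mu>)) \<partial>\<Gamma>)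
    \<le> C0 * (if \<beta> = 1 then 5 + ln (1 / \<delta>)
             else if \<beta> > 1 then C
             else C * min (sqrt (real T)) (1 / \<delta>) powr (1 - \<beta>))"
proof (intro exI[of _ "gap_bound_constant \<beta>"] allI impI)
  fix \<Gamma> :: "real measure" and c0 C0 \<delta> :: real and T :: nat
  assume reg: "beta_regular \<Gamma> \<beta> c0 C0" and \<delta>: "0 < \<delta>" "\<delta> < 1" and "0 < T"
  have "0 \<le> gap_bound_constant \<beta>" "0 \<le> ln (1 / \<delta>)" "1 \<le> C0"
    using \<delta> beta_regular_one_le_C0[OF reg] by (auto simp: gap_bound_constant_def)
  then have "0 \<le> C0 * (if \<beta> = 1 then 5 + ln (1 / \<delta>)
                        else if \<beta> > 1 then gap_bound_constant \<beta>
                        else gap_bound_constant \<beta> * min (sqrt (real T)) (1 / \<delta>) powr (1 - \<beta>))"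
    by simp
  from integral_real_bounded[OF this nn_integral_gap_integrand_le[OF reg \<delta> \<open>0 < T\<close>]]
  show "(\<integral>\<mu>. indicator {..<1 - 3 * \<delta>} \<mu> * min (1 + 1 / (1 - 2 * \<delta> - \<mu>)) (real T * (1 - \<mu>)) \<partial>\<Gamma>)
    \<le> C0 * (if \<beta> = 1 then 5 + ln (1 / \<delta>)
             else if \<beta> > 1 then gap_bound_constant \<beta>
             else gap_bound_constant \<beta> * min (sqrt (real T)) (1 / \<delta>) powr (1 - \<beta>))"
    unfolding gap_integrand_def .
qed

end
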